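(* Let $n,m$ be positive integers and $\sigma$ a composition of $m$ with $\ell(\sigma)$ parts. The maps $\Phi_\sigma:\Delta(\mathcal{T}_n,m)\to\Gamma(\mathsf{hypo}_{n+\ell(\sigma)-1},\sigma)$, $Q\mapsto\pi_\sigma(Q)$, and $\Gamma(\mathsf{hypo}_{n+\ell(\sigma)-1},\sigma)\to\Delta(\mathcal{T}_n,m)$, $T\mapsto\overline{T}$, are mutually inverse isomorphisms of unlabelled directed graphs.
   Context: A quasi-array of size $m$ is an array $Q$ with cells $(i,j)$, $1\le i\le m$, $1\le j\le m-i+1$, each containing a positive integer $Q_{(i,j)}$, with $Q_{(1,j)}\le Q_{(1,j+1)}$ and $Q_{(i,j)}=Q_{(1,i+j-1)}+i-1$. The $k$-th diagonal is the set of cells with $i+j-1=k$. For $Q$ of size $m$: $D_m$ is always defined and adds $1$ to every entry of the $m$-th diagonal; for $1\le k\le m-1$, $D_k$ is defined iff $Q_{(1,k)}<Q_{(1,k+1)}$, and then adds $1$ to every entry of the $k$-th diagonal. $\mathcal{T}_n$ is the set of quasi-arrays whose first-row rightmost entry is at most $n$. $\Delta(\mathcal{T}_n,m)$ is the directed graph whose vertices are the quasi-arrays of size $m$ in $\mathcal{T}_n$, with an edge $Q\to D_k(Q)$ labelled $k$ whenever $D_k$ is defined on $Q$ and $D_k(Q)\in\mathcal{T}_n$. A quasi-ribbon tableau of shape $\sigma=(\sigma_1,\dots,\sigma_r)$ is a filling with positive integers of the diagram having $\sigma_i$ cells in row $i$, the leftmost cell of row $i+1$ directly below the rightmost cell of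 row $i$, weakly increasing along rows and strictly increasing down columns; its column reading is read column by column left to right, each column bottom to top. Quasi-Kashiwara operator $f_i$ on a word $u$: undefined if $u$ contains a subsequence $(i+1)\,i$ or no letter $i$; otherwise replaces the rightmost $i$ by $i+1$. For $N\ge1$, $\Gamma(\mathsf{hypo}_N,\sigma)$ is the directed graph whose vertices are the quasi-ribbon tableaux of shape $\sigma$ with entries in $\{1,\dots,N\}$ (identified with column readings), with an edge $u\to f_i(u)$ labelled $i$ for $1\le i\le N-1$ whenever $f_i(u)$ is defined. $\pi_\sigma(Q)$ is the quasi-ribbon tableau formed by the cells of $Q$ making up a quasi-ribbon diagram of shape $\sigma$ with first cell $(1,1)$; for a quasi-ribbon tableau $T$ of shape $\sigma$ with $m$ cells, $\overline{T}$ is the unique quasi-array of size $m$ with $\pi_\sigma(\overline{T})=T$. *)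

theory Defs
  imports Main
begin

text \<open>Arrays and tableaux are functions from cells (row i, column j), 1-indexed,
  to positive integers, and are 0 outside their set of cells.\<close>

type_synonym array = "nat \<times> nat \<Rightarrow> nat"

definition qa_cells :: "nat \<Rightarrow> (nat \<times> nat) set" where
  "qa_cells m = {(i, j). 1 \<le> i \<and> i \<le> m \<and> 1 \<le> j \<and> j \<le> m - i + 1}"

definition is_quasi_array :: "nat \<Rightarrow> array \<Rightarrow> bool" where
  "is_quasi_array m Q \<longleftrightarrow>
     (\<forall>c. c \<notin> qa_cells m \<longrightarrow> Q c = 0) \<and>
     (\<forall>c \<in> qa_cells m. 0 < Q c) \<and>
     (\<forall>j. 1 \<le> j \<and> j < m \<longrightarrow> Q (1, j) \<le> Q (1, j + 1)) \<and>
     (\<forall>i j. (i, j) \<in> qa_cells m \<longrightarrow> Q (i, j) = Q (1, i + j - 1) + (i - 1))"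

definition qa_D :: "nat \<Rightarrow> nat \<Rightarrow> array \<Rightarrow> array" where
  "qa_D m k Q = (\<lambda>(i, j). if (i, j) \<in> qa_cells m \<and> i + j - 1 = k then Q (i, j) + 1 else Q (i, j))"

definition qa_D_defined :: "nat \<Rightarrow> nat \<Rightarrow> array \<Rightarrow> bool" where
  "qa_D_defined m k Q \<longleftrightarrow> k = m \<or> (1 \<le> k \<and> k < m \<and> Q (1, k) < Q (1, k + 1))"

definition Delta_V :: "nat \<Rightarrow> nat \<Rightarrow> array set" where
  "Delta_V n m = {Q. is_quasi_array m Q \<and> Q (1, m) \<le> n}"

definition Delta_E :: "nat \<Rightarrow> nat \<Rightarrow> (array \<times> array) set" where
  "Delta_E n m = {(Q, qa_D m k Q) | Q k. Q \<in> Delta_V n m \<and> 1 \<le> k \<and> k \<le> m \<and>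
       qa_D_defined m k Q \<and> qa_D m k Q \<in> Delta_V n m}"

text \<open>Row i (1-indexed) of the quasi-ribbon diagram of shape \<open>\<sigma>\<close> starts in column
  \<open>c_i\<close>, with \<open>c_1 = 1\<close> and \<open>c_{i+1} = c_i + \<sigma>_i - 1\<close>; its first cell is (1,1).\<close>
definition ribbon_start :: "nat list \<Rightarrow> nat \<Rightarrow> nat" where
  "ribbon_start \<sigma> i = 1 + sum_list (map (\<lambda>x. x - 1) (take (i - 1) \<sigma>))"

definition ribbon_cells :: "nat list \<Rightarrow> (nat \<times> nat) set" where
  "ribbon_cells \<sigma> = {(i, j). 1 \<le> i \<and> i \<le> length \<sigma> \<and>
       ribbon_start \<sigma> i \<le> j \<and> j < ribbon_start \<sigma> i + \<sigma> ! (i - 1)}"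

definition is_qrt :: "nat list \<Rightarrow> array \<Rightarrow> bool" where
  "is_qrt \<sigma> T \<longleftrightarrow>
     (\<forall>c. c \<notin> ribbon_cells \<sigma> \<longrightarrow> T c = 0) \<and>
     (\<forall>c \<in> ribbon_cells \<sigma>. 0 < T c) \<and>
     (\<forall>i j. (i, j) \<in> ribbon_cells \<sigma> \<and> (i, j + 1) \<in> ribbon_cells \<sigma> \<longrightarrow> T (i, j) \<le> T (i, j + 1)) \<and>
     (\<forall>i j. (i, j) \<in> ribbon_cells \<sigma> \<and> (i + 1, j) \<in> ribbon_cells \<sigma> \<longrightarrow> T (i, j) < T (i + 1, j))"

definition col_reading :: "nat list \<Rightarrow> array \<Rightarrow> nat list" where
  "col_reading \<sigma> T = concat (map (\<lambda>j. map (\<lambda>i. T (i, j))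
       (filter (\<lambda>i. (i, j) \<in> ribbon_cells \<sigma>) (rev [1..<length \<sigma> + 1])))
     [1..<sum_list \<sigma> + 1])"

definition qk_defined :: "nat \<Rightarrow> nat list \<Rightarrow> bool" where
  "qk_defined i u \<longleftrightarrow> i \<in> set u \<and>
     \<not> (\<exists>p q. p < q \<and> q < length u \<and> u ! p = i + 1 \<and> u ! q = i)"

definition qk_f :: "nat \<Rightarrow> nat list \<Rightarrow> nat list" where
  "qk_f i u = u[(GREATEST p. p < length u \<and> u ! p = i) := i + 1]"

definition Gamma_V :: "nat \<Rightarrow> nat list \<Rightarrow> array set" where
  "Gamma_V N \<sigma> = {T. is_qrt \<sigma> T \<and> (\<forall>c \<in> ribbon_cells \<sigma>. T c \<le> N)}"

definition Gamma_E :: "nat \<Rightarrow> nat list \<Rightarrow> (array \<times> array) set" where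
  "Gamma_E N \<sigma> = {(T, T') | T T'. T \<in> Gamma_V N \<sigma> \<and> T' \<in> Gamma_V N \<sigma> \<and>
       (\<exists>i. 1 \<le> i \<and> i \<le> N - 1 \<and> qk_defined i (col_reading \<sigma> T) \<and>
            col_reading \<sigma> T' = qk_f i (col_reading \<sigma> T))}"

definition pi_sigma :: "nat list \<Rightarrow> array \<Rightarrow> array" where
  "pi_sigma \<sigma> Q = (\<lambda>c. if c \<in> ribbon_cells \<sigma> then Q c else 0)"

definition qa_bar :: "nat \<Rightarrow> nat list \<Rightarrow> array \<Rightarrow> array" where
  "qa_bar m \<sigma> T = (THE Q. is_quasi_array m Q \<and> pi_sigma \<sigma> Q = T)"

end

theory Submission
  imports Defs
begin

text \<open>The ribbon diagram of shape \<open>\<sigma>\<close> with first cell (1,1) meets the \<open>d\<close>-th diagonal of a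
  quasi-array of size \<open>m = |\<sigma>|\<close> in exactly one cell, which lies in the row \<open>r(d)\<close> of the
  ribbon containing its \<open>d\<close>-th cell; going from diagonal \<open>d\<close> to \<open>d + 1\<close> the ribbon moves
  one cell right (\<open>r\<close> constant) or one cell down (\<open>r\<close> increases by one).
  A quasi-array \<open>Q\<close> is determined by its first row \<open>q\<close>, and its entry on that cell is
  \<open>q(d) + r(d) - 1\<close>. Hence \<open>q\<close> is positive and weakly increasing exactly when these
  entries form a quasi-ribbon tableau (weak along right steps, strict along down steps), and
  \<open>q(m) \<le> n\<close> exactly when the last entry, in row \<open>length \<sigma>\<close>, is at most \<open>n + length \<sigma> - 1\<close>.

  The operator \<open>D_k\<close> adds one to the ribbon entry on diagonal \<open>k\<close> and is defined exactly when
  the result is again a tableau. The column reading lists the ribbon cells diagonal by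
  diagonal, except that the two cells of a column are swapped. So in the reading of a
  tableau the rightmost letter \<open>i\<close> sits on the last diagonal carrying \<open>i\<close>, a subsequence
  \<open>(i + 1) i\<close> occurs only for a column with entries \<open>i\<close> over \<open>i + 1\<close>, and \<open>f_i\<close> is
  defined precisely when raising that last \<open>i\<close> keeps a tableau, and then acts as \<open>D_k\<close>.\<close>

lemma sum_list_minus_one_add_length:
  "\<forall>x\<in>set xs. 0 < (x::nat) \<Longrightarrow> sum_list (map (\<lambda>x. x - 1) xs) + length xs = sum_list xs"
  by (induction xs) auto

section \<open>Geometry of the ribbon diagram\<close>

locale ribbon =
  fixes \<sigma> :: "nat list"
  assumes parts_pos: "\<forall>x\<in>set \<sigma>. 0 < x"
begin

abbreviation M :: nat where "M \<equiv> sum_list \<sigma>"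

definition psum :: "nat \<Rightarrow> nat" where
  "psum i = sum_list (take i \<sigma>)"

lemma psum_0 [simp]: "psum 0 = 0"
  by (simp add: psum_def)

lemma psum_Suc: "i < length \<sigma> \<Longrightarrow> psum (Suc i) = psum i + \<sigma> ! i"
  by (simp add: psum_def take_Suc_conv_app_nth)

lemma psum_length: "psum (length \<sigma>) = M"
  by (simp add: psum_def)

lemma psum_strict_mono: "i < j \<Longrightarrow> j \<le> length \<sigma> \<Longrightarrow> psum i < psum j"
proof (induction j)
  case (Suc j)
  have "0 < \<sigma> ! j" using parts_pos Suc.prems by auto
  then show ?case using Suc psum_Suc[of j] by (cases "i = j") auto
qed simp

lemma psum_mono: "i \<le> j \<Longrightarrow> j \<le> length \<sigma> \<Longrightarrow> psum i \<le> psum j"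
  using psum_strict_mono by (cases "i = j") (auto intro: less_imp_le)

lemma le_psum: "i \<le> length \<sigma> \<Longrightarrow> i \<le> psum i"
proof (induction i)
  case (Suc i)
  then show ?case using psum_strict_mono[of i "Suc i"] by auto
qed simp

lemma ribbon_start_add:
  assumes "i \<le> length \<sigma>"
  shows "ribbon_start \<sigma> i + (i - 1) = 1 + psum (i - 1)"
proof -
  have "sum_list (map (\<lambda>x. x - 1) (take (i - 1) \<sigma>)) + length (take (i - 1) \<sigma>) = psum (i - 1)"
    unfolding psum_def using parts_pos
    by (intro sum_list_minus_one_add_length) (auto dest: in_set_takeD)
  then show ?thesis using assms by (simp add: ribbon_start_def)
qed

lemma mem_ribbon_cells_iff: "(i, j) \<in> ribbon_cells \<sigma> \<longleftrightarrow>
   1 \<le> i \<and> i \<le> length \<sigma> \<and> psum (i - 1) < i + j - 1 \<and> i + j - 1 \<le> psum i"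
proof (cases "1 \<le> i \<and> i \<le> length \<sigma>")
  case True
  have "ribbon_start \<sigma> i + (i - 1) = 1 + psum (i - 1)"
    using True by (intro ribbon_start_add) simp
  moreover have "psum i = psum (i - 1) + \<sigma> ! (i - 1)" using psum_Suc[of "i - 1"] True by auto
  moreover have "i - 1 \<le> psum (i - 1)" using le_psum True by auto
  ultimately show ?thesis using True by (auto simp: ribbon_cells_def; linarith)
qed (auto simp: ribbon_cells_def)

definition diag_row :: "nat \<Rightarrow> nat" where
  "diag_row d = (LEAST i. d \<le> psum i)"

definition diag_col :: "nat \<Rightarrow> nat" where
  "diag_col d = d + 1 - diag_row d"

definition diag_cell :: "nat \<Rightarrow> nat \<times> nat" where
  "diag_cell d = (diag_row d, diag_col d)"

context
  fixes d assumes d: "1 \<le> d" "d \<le> M"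
begin

lemma le_psum_diag_row: "d \<le> psum (diag_row d)"
  unfolding diag_row_def by (rule LeastI[of _ "length \<sigma>"]) (use d psum_length in simp)

lemma diag_row_le_length: "diag_row d \<le> length \<sigma>"
  unfolding diag_row_def by (rule Least_le) (use d psum_length in simp)

lemma diag_row_ge_1: "1 \<le> diag_row d"
  using le_psum_diag_row d by (cases "diag_row d") auto

lemma psum_pred_diag_row_less: "psum (diag_row d - 1) < d"
  using not_less_Least[of "diag_row d - 1" "\<lambda>i. d \<le> psum i"] diag_row_ge_1
  unfolding diag_row_def[symmetric] by simp

lemma diag_row_unique:
  assumes "1 \<le> i" "i \<le> length \<sigma>" "psum (i - 1) < d" "d \<le> psum i"
  shows "diag_row d = i"
proof (rule ccontr)
  assume "diag_row d \<noteq> i"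
  then consider "diag_row d < i" | "i < diag_row d" by linarith
  then show False
  proof cases
    case 1
    then have "psum (diag_row d) \<le> psum (i - 1)" using psum_mono assms by simp
    then show False using assms le_psum_diag_row by simp
  next
    case 2
    then have "psum i \<le> psum (diag_row d - 1)" using psum_mono diag_row_le_length by simp
    then show False using assms psum_pred_diag_row_less by simp
  qed
qed

lemma diag_row_le: "diag_row d \<le> d"
proof -
  have "diag_row d - 1 \<le> psum (diag_row d - 1)" using le_psum diag_row_le_length by simp
  then show ?thesis using psum_pred_diag_row_less by linarith
qed

lemma diag_cell_in_ribbon_cells: "diag_cell d \<in> ribbon_cells \<sigma>"
  using diag_row_ge_1 diag_row_le_length le_psum_diag_row psum_pred_diag_row_less diag_row_le
  unfolding diag_cell_def diag_col_def mem_ribbon_cells_iff by auto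

lemma diag_cell_in_qa_cells: "diag_cell d \<in> qa_cells M"
  using diag_row_ge_1 diag_row_le diag_row_le_length d
  unfolding diag_cell_def diag_col_def qa_cells_def by auto

end

lemma diag_cell_of_ribbon_cell:
  assumes "(i, j) \<in> ribbon_cells \<sigma>"
  shows "1 \<le> i + j - 1" "i + j - 1 \<le> M" "diag_cell (i + j - 1) = (i, j)"
proof -
  have ij: "1 \<le> i" "i \<le> length \<sigma>" "psum (i - 1) < i + j - 1" "i + j - 1 \<le> psum i"
    using assms by (auto simp: mem_ribbon_cells_iff)
  moreover have "psum i \<le> M" using psum_mono[of i "length \<sigma>"] ij psum_length by simp
  ultimately show d: "1 \<le> i + j - 1" "i + j - 1 \<le> M" by auto
  have "diag_row (i + j - 1) = i" using diag_row_unique[OF d] ij by simp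
  then show "diag_cell (i + j - 1) = (i, j)" using ij by (auto simp: diag_cell_def diag_col_def)
qed

lemma ribbon_cells_eq_image: "ribbon_cells \<sigma> = diag_cell ` {1..M}"
proof
  show "ribbon_cells \<sigma> \<subseteq> diag_cell ` {1..M}"
  proof
    fix c assume "c \<in> ribbon_cells \<sigma>"
    then obtain i j where "c = (i, j)" "(i, j) \<in> ribbon_cells \<sigma>" by (cases c) auto
    then show "c \<in> diag_cell ` {1..M}"
      using diag_cell_of_ribbon_cell[of i j] by (auto intro!: image_eqI[of _ _ "i + j - 1"])
  qed
  show "diag_cell ` {1..M} \<subseteq> ribbon_cells \<sigma>" using diag_cell_in_ribbon_cells by auto
qed

lemma diag_cell_inj:
  "diag_cell d = diag_cell e \<Longrightarrow> 1 \<le> d \<Longrightarrow> d \<le> M \<Longrightarrow> 1 \<le> e \<Longrightarrow> e \<le> M \<Longrightarrow> d = e"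
  using diag_row_le[of d] diag_row_le[of e] by (auto simp: diag_cell_def diag_col_def)

lemma ribbon_cells_subset_qa_cells: "ribbon_cells \<sigma> \<subseteq> qa_cells M"
  using diag_cell_in_qa_cells by (auto simp: ribbon_cells_eq_image)

lemma diag_row_mono: "1 \<le> d \<Longrightarrow> d \<le> e \<Longrightarrow> e \<le> M \<Longrightarrow> diag_row d \<le> diag_row e"
  using le_psum_diag_row[of e] unfolding diag_row_def[of d] by (intro Least_le) simp

lemma diag_row_last: "1 \<le> M \<Longrightarrow> diag_row M = length \<sigma>"
  using diag_row_unique[of M "length \<sigma>"] psum_strict_mono[of "length \<sigma> - 1" "length \<sigma>"] psum_length
  by (cases \<sigma>) auto

lemma diag_row_Suc:
  assumes "1 \<le> d" "d < M"
  shows "diag_row (d + 1) = diag_row d \<or> diag_row (d + 1) = diag_row d + 1"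
proof (cases "d + 1 \<le> psum (diag_row d)")
  case True
  then have "diag_row (d + 1) \<le> diag_row d" unfolding diag_row_def[of "d + 1"] by (intro Least_le)
  then show ?thesis using diag_row_mono[of d "d + 1"] assms by simp
next
  case False
  then have last: "psum (diag_row d) = d" using le_psum_diag_row[of d] assms by simp
  then have "diag_row d \<noteq> length \<sigma>" using psum_length assms by auto
  then have "diag_row d < length \<sigma>" using diag_row_le_length[of d] assms by simp
  then have "diag_row (d + 1) = diag_row d + 1"
    using diag_row_unique[of "d + 1" "diag_row d + 1"] psum_strict_mono[of "diag_row d" "diag_row d + 1"]
      last assms
    by simp
  then show ?thesis by simp
qed

lemma diag_col_Suc_mono: "1 \<le> d \<Longrightarrow> d < M \<Longrightarrow> diag_col d \<le> diag_col (d + 1)"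
  using diag_row_Suc[of d] diag_row_le[of d] unfolding diag_col_def by auto

lemma diag_col_mono:
  assumes "1 \<le> d" "d \<le> e" "e \<le> M"
  shows "diag_col d \<le> diag_col e"
  using assms(2,3)
proof (induction e rule: dec_induct)
  case (step e)
  then show ?case using diag_col_Suc_mono[of e] assms(1) by simp
qed simp

lemma diag_col_eq_imp_down:
  assumes "1 \<le> d" "d < e" "e \<le> M" "diag_col d = diag_col e"
  shows "diag_row (d + 1) = diag_row d + 1"
proof (rule ccontr)
  assume "diag_row (d + 1) \<noteq> diag_row d + 1"
  then have "diag_col (d + 1) = diag_col d + 1"
    using diag_row_Suc[of d] diag_row_le[of d] assms unfolding diag_col_def by simp
  moreover have "diag_col (d + 1) \<le> diag_col e" using diag_col_mono[of "d + 1" e] assms by simp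
  ultimately show False using assms by simp
qed

end

section \<open>Quasi-arrays and their first rows\<close>

lemma is_quasi_arrayD:
  assumes "is_quasi_array m Q"
  shows "c \<notin> qa_cells m \<Longrightarrow> Q c = 0" "c \<in> qa_cells m \<Longrightarrow> 0 < Q c"
    "1 \<le> j \<Longrightarrow> j < m \<Longrightarrow> Q (1, j) \<le> Q (1, j + 1)"
    "(i, j) \<in> qa_cells m \<Longrightarrow> Q (i, j) = Q (1, i + j - 1) + (i - 1)"
  using assms unfolding is_quasi_array_def by blast+

definition qa_of_row :: "nat \<Rightarrow> (nat \<Rightarrow> nat) \<Rightarrow> array" where
  "qa_of_row m q = (\<lambda>(i, j). if (i, j) \<in> qa_cells m then q (i + j - 1) + (i - 1) else 0)"

lemma qa_eq_qa_of_row: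
  assumes "is_quasi_array m Q"
  shows "Q = qa_of_row m (\<lambda>k. Q (1, k))"
proof
  fix c :: "nat \<times> nat"
  obtain i j where c: "c = (i, j)" by fastforce
  show "Q c = qa_of_row m (\<lambda>k. Q (1, k)) c"
    using is_quasi_arrayD(1)[OF assms, of c] is_quasi_arrayD(4)[OF assms, of i j] c by (simp add: qa_of_row_def)
qed

lemma qa_of_row_first_row: "1 \<le> k \<Longrightarrow> k \<le> m \<Longrightarrow> qa_of_row m q (1, k) = q k"
  by (simp add: qa_of_row_def qa_cells_def)

lemma is_quasi_array_qa_of_row:
  assumes "\<And>k. 1 \<le> k \<Longrightarrow> k \<le> m \<Longrightarrow> 0 < q k"
    and "\<And>k. 1 \<le> k \<Longrightarrow> k < m \<Longrightarrow> q k \<le> q (k + 1)"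
  shows "is_quasi_array m (qa_of_row m q)"
  unfolding is_quasi_array_def
proof (intro conjI allI ballI impI)
  fix c assume c: "c \<in> qa_cells m"
  then obtain i j where "c = (i, j)" "1 \<le> i" "i \<le> m" "1 \<le> j" "j \<le> m - i + 1"
    by (auto simp: qa_cells_def)
  moreover have "0 < q (i + j - 1)" using assms(1) calculation by simp
  ultimately show "0 < qa_of_row m q c" using c by (simp add: qa_of_row_def)
next
  fix j assume "1 \<le> j \<and> j < m"
  then show "qa_of_row m q (1, j) \<le> qa_of_row m q (1, j + 1)"
    using assms(2)[of j] qa_of_row_first_row[of j m q] qa_of_row_first_row[of "j + 1" m q] by simp
next
  fix i j assume "(i, j) \<in> qa_cells m"
  then show "qa_of_row m q (i, j) = qa_of_row m q (1, i + j - 1) + (i - 1)"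
    by (simp add: qa_of_row_def qa_cells_def) linarith
qed (auto simp: qa_of_row_def)

lemma qa_first_row_pos: "is_quasi_array m Q \<Longrightarrow> 1 \<le> k \<Longrightarrow> k \<le> m \<Longrightarrow> 0 < Q (1, k)"
  using is_quasi_arrayD(2)[of m Q "(1, k)"] by (simp add: qa_cells_def)

lemma qa_first_row_mono:
  assumes "is_quasi_array m Q" "1 \<le> a" "a \<le> b" "b \<le> m"
  shows "Q (1, a) \<le> Q (1, b)"
  using assms(3,4)
proof (induction b rule: dec_induct)
  case (step b)
  then show ?case using is_quasi_arrayD(3)[OF assms(1), of b] assms(2) by simp
qed simp

lemma qa_row_mono:
  assumes "is_quasi_array m Q" "(i, j) \<in> qa_cells m" "(i, j + 1) \<in> qa_cells m"
  shows "Q (i, j) \<le> Q (i, j + 1)"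
proof -
  have "Q (1, i + j - 1) \<le> Q (1, i + j)"
    using assms(2,3) by (intro qa_first_row_mono[OF assms(1)]) (auto simp: qa_cells_def)
  then show ?thesis
    using is_quasi_arrayD(4)[OF assms(1,2)] is_quasi_arrayD(4)[OF assms(1,3)] assms(2)
    by (auto simp: qa_cells_def)
qed

lemma qa_col_strict:
  assumes "is_quasi_array m Q" "(i, j) \<in> qa_cells m" "(i + 1, j) \<in> qa_cells m"
  shows "Q (i, j) < Q (i + 1, j)"
proof -
  have "Q (1, i + j - 1) \<le> Q (1, i + j)"
    using assms(2,3) by (intro qa_first_row_mono[OF assms(1)]) (auto simp: qa_cells_def)
  then show ?thesis
    using is_quasi_arrayD(4)[OF assms(1,2)] is_quasi_arrayD(4)[OF assms(1,3)] assms(2)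
    by (auto simp: qa_cells_def)
qed

lemma qa_le_last:
  assumes "is_quasi_array m Q" "(i, j) \<in> qa_cells m"
  shows "Q (i, j) \<le> Q (1, m) + (i - 1)"
proof -
  have "Q (1, i + j - 1) \<le> Q (1, m)"
    using assms(2) by (intro qa_first_row_mono[OF assms(1)]) (auto simp: qa_cells_def)
  then show ?thesis using is_quasi_arrayD(4)[OF assms] by simp
qed

lemma qa_D_qa_of_row: "qa_D m k (qa_of_row m q) = qa_of_row m (q(k := q k + 1))"
  by (auto simp: qa_D_def qa_of_row_def fun_eq_iff)

lemma is_quasi_array_qa_D:
  assumes Q: "is_quasi_array m Q" and k: "1 \<le> k" "k \<le> m" and defined: "qa_D_defined m k Q"
  shows "is_quasi_array m (qa_D m k Q)"
proof -
  define q where "q = (\<lambda>k. Q (1, k))"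
  have "is_quasi_array m (qa_of_row m (q(k := q k + 1)))"
  proof (rule is_quasi_array_qa_of_row)
    fix j assume "1 \<le> j" "j \<le> m"
    then show "0 < (q(k := q k + 1)) j" using qa_first_row_pos[OF Q] by (simp add: q_def)
  next
    fix j assume j: "1 \<le> j" "j < m"
    then show "(q(k := q k + 1)) j \<le> (q(k := q k + 1)) (j + 1)"
      using is_quasi_arrayD(3)[OF Q j] defined by (auto simp: q_def qa_D_defined_def)
  qed
  then show ?thesis using qa_eq_qa_of_row[OF Q] qa_D_qa_of_row unfolding q_def by metis
qed

context ribbon
begin

lemma qa_of_row_diag_cell: "1 \<le> d \<Longrightarrow> d \<le> M \<Longrightarrow> qa_of_row M q (diag_cell d) = q d + (diag_row d - 1)"
  using diag_cell_in_qa_cells[of d] diag_row_le[of d] by (auto simp: qa_of_row_def diag_cell_def diag_col_def)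

lemma qa_diag_cell:
  "is_quasi_array M Q \<Longrightarrow> 1 \<le> d \<Longrightarrow> d \<le> M \<Longrightarrow> Q (diag_cell d) = Q (1, d) + (diag_row d - 1)"
  using qa_of_row_diag_cell[of d "\<lambda>k. Q (1, k)"] qa_eq_qa_of_row[of M Q] by simp

lemma pi_sigma_diag_cell: "1 \<le> d \<Longrightarrow> d \<le> M \<Longrightarrow> pi_sigma \<sigma> Q (diag_cell d) = Q (diag_cell d)"
  using diag_cell_in_ribbon_cells by (simp add: pi_sigma_def)

lemma pi_sigma_inj:
  assumes "is_quasi_array M Q" "is_quasi_array M Q'" "pi_sigma \<sigma> Q = pi_sigma \<sigma> Q'"
  shows "Q = Q'"
proof -
  have "Q (1, k) = Q' (1, k)" if "1 \<le> k" "k \<le> M" for k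
    using qa_diag_cell[OF assms(1) that] qa_diag_cell[OF assms(2) that] assms(3)
      pi_sigma_diag_cell[OF that, of Q] pi_sigma_diag_cell[OF that, of Q']
    by simp
  then have "qa_of_row M (\<lambda>k. Q (1, k)) = qa_of_row M (\<lambda>k. Q' (1, k))"
    by (auto simp: qa_of_row_def qa_cells_def fun_eq_iff)
  then show ?thesis using qa_eq_qa_of_row assms by metis
qed

lemma pi_sigma_qa_D:
  assumes Q: "is_quasi_array M Q" and k: "1 \<le> k" "k \<le> M"
  shows "pi_sigma \<sigma> (qa_D M k Q) = (pi_sigma \<sigma> Q)(diag_cell k := pi_sigma \<sigma> Q (diag_cell k) + 1)"
proof
  fix c
  define q where "q = (\<lambda>k. Q (1, k))"
  have Q_eq: "Q = qa_of_row M q" and D_eq: "qa_D M k Q = qa_of_row M (q(k := q k + 1))"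
    using qa_eq_qa_of_row[OF Q] qa_D_qa_of_row unfolding q_def by metis+
  show "pi_sigma \<sigma> (qa_D M k Q) c = ((pi_sigma \<sigma> Q)(diag_cell k := pi_sigma \<sigma> Q (diag_cell k) + 1)) c"
  proof (cases "c \<in> ribbon_cells \<sigma>")
    case True
    then obtain d where d: "1 \<le> d" "d \<le> M" "c = diag_cell d" by (auto simp: ribbon_cells_eq_image)
    then have "c = diag_cell k \<longleftrightarrow> d = k" using diag_cell_inj k by blast
    then show ?thesis
      using d k Q_eq D_eq qa_of_row_diag_cell pi_sigma_diag_cell by auto
  next
    case False
    then have "c \<noteq> diag_cell k" using diag_cell_in_ribbon_cells k by auto
    then show ?thesis using False by (simp add: pi_sigma_def)
  qed
qed

end

lemma qrt_outside_ribbon: "is_qrt \<sigma> T \<Longrightarrow> c \<notin> ribbon_cells \<sigma> \<Longrightarrow> T c = 0"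
  unfolding is_qrt_def by blast

context ribbon
begin

text \<open>By \<open>qrt_diag_Suc\<close>, adding one to the entry of a tableau on diagonal \<open>k\<close>
  leaves a tableau exactly when it is raisable at \<open>k\<close>.\<close>
definition raisable :: "array \<Rightarrow> nat \<Rightarrow> bool" where
  "raisable T k \<longleftrightarrow>
     k = M \<or> T (diag_cell k) + (diag_row (k + 1) - diag_row k) < T (diag_cell (k + 1))"

context
  fixes T assumes T: "is_qrt \<sigma> T"
begin

lemma qrt_diag_Suc:
  assumes "1 \<le> d" "d < M"
  shows "T (diag_cell d) + (diag_row (d + 1) - diag_row d) \<le> T (diag_cell (d + 1))"
proof -
  have cells: "diag_cell d \<in> ribbon_cells \<sigma>" "diag_cell (d + 1) \<in> ribbon_cells \<sigma>"
    using diag_cell_in_ribbon_cells assms by auto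
  from diag_row_Suc[OF assms] show ?thesis
  proof
    assume right: "diag_row (d + 1) = diag_row d"
    then have "diag_cell (d + 1) = (diag_row d, diag_col d + 1)"
      using diag_row_le[of d] assms by (simp add: diag_cell_def diag_col_def)
    then show ?thesis using T cells right unfolding is_qrt_def diag_cell_def by auto
  next
    assume down: "diag_row (d + 1) = diag_row d + 1"
    then have "diag_cell (d + 1) = (diag_row d + 1, diag_col d)"
      using diag_row_le[of d] assms by (simp add: diag_cell_def diag_col_def)
    then show ?thesis using T cells down unfolding is_qrt_def diag_cell_def by fastforce
  qed
qed

lemma qrt_diag_mono:
  assumes "1 \<le> d" "d \<le> e" "e \<le> M"
  shows "T (diag_cell d) \<le> T (diag_cell e)"
  using assms(2,3)
proof (induction e rule: dec_induct)
  case (step e)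
  then show ?case using qrt_diag_Suc[of e] assms(1) by simp
qed simp

lemma diag_row_le_qrt: "1 \<le> d \<Longrightarrow> d \<le> M \<Longrightarrow> diag_row d \<le> T (diag_cell d)"
proof (induction d rule: nat_induct_at_least)
  case base
  have "0 < T (diag_cell 1)" using T diag_cell_in_ribbon_cells[of 1] base by (auto simp: is_qrt_def)
  then show ?case using diag_row_le[of 1] base by simp
next
  case (Suc d)
  then show ?case using qrt_diag_Suc[of d] diag_row_Suc[of d] by auto
qed

lemma qrt_diag_col_strict:
  assumes "1 \<le> d" "d < e" "e \<le> M" "diag_col d = diag_col e"
  shows "T (diag_cell d) < T (diag_cell e)"
proof -
  have "T (diag_cell d) < T (diag_cell (d + 1))"
    using qrt_diag_Suc[of d] diag_col_eq_imp_down[OF assms] assms by simp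
  also have "\<dots> \<le> T (diag_cell e)" using qrt_diag_mono[of "d + 1" e] assms by simp
  finally show ?thesis .
qed

lemma raisable_imp_last:
  assumes k: "1 \<le> k" "k \<le> M" and raisable: "raisable T k"
    and x: "1 \<le> x" "x \<le> M" "T (diag_cell x) = T (diag_cell k)"
  shows "x \<le> k"
proof (rule ccontr)
  assume "\<not> x \<le> k"
  then have "T (diag_cell (k + 1)) \<le> T (diag_cell x)" using qrt_diag_mono[of "k + 1" x] k x by simp
  moreover have "T (diag_cell k) < T (diag_cell (k + 1))"
    using raisable x \<open>\<not> x \<le> k\<close> by (auto simp: raisable_def)
  ultimately show False using x by simp
qed

lemma raisable_imp_no_column:
  assumes k: "1 \<le> k" "k \<le> M" and raisable: "raisable T k"
    and d: "1 \<le> d" "d < M" "diag_row (d + 1) = diag_row d + 1" "T (diag_cell d) = T (diag_cell k)"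
  shows "T (diag_cell (d + 1)) \<noteq> T (diag_cell k) + 1"
proof (cases "d = k")
  case True
  then show ?thesis using raisable d by (simp add: raisable_def)
next
  case False
  then have "d + 1 \<le> k" using raisable_imp_last[OF k raisable, of d] d by simp
  then have "T (diag_cell (d + 1)) \<le> T (diag_cell k)" using qrt_diag_mono[of "d + 1" k] k by simp
  then show ?thesis by simp
qed

lemma raisableI:
  assumes k: "1 \<le> k" "k \<le> M"
    and last: "\<And>x. 1 \<le> x \<Longrightarrow> x \<le> M \<Longrightarrow> T (diag_cell x) = T (diag_cell k) \<Longrightarrow> x \<le> k"
    and no_column: "diag_row (k + 1) = diag_row k + 1 \<Longrightarrow> k < M \<Longrightarrow>
      T (diag_cell (k + 1)) \<noteq> T (diag_cell k) + 1"
  shows "raisable T k"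
proof (cases "k = M")
  case False
  then have kM: "k < M" using k by simp
  have "T (diag_cell (k + 1)) \<noteq> T (diag_cell k)" using last[of "k + 1"] kM by auto
  moreover have "T (diag_cell k) + (diag_row (k + 1) - diag_row k) \<le> T (diag_cell (k + 1))"
    using qrt_diag_Suc k kM by simp
  ultimately show ?thesis using diag_row_Suc[of k] no_column k kM by (auto simp: raisable_def)
qed (simp add: raisable_def)

end

lemma pi_sigma_in_Gamma_V:
  assumes "Q \<in> Delta_V n M"
  shows "pi_sigma \<sigma> Q \<in> Gamma_V (n + length \<sigma> - 1) \<sigma>"
proof -
  have Q: "is_quasi_array M Q" and last: "Q (1, M) \<le> n" using assms by (auto simp: Delta_V_def)
  have cells: "c \<in> qa_cells M" if "c \<in> ribbon_cells \<sigma>" for c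
    using that ribbon_cells_subset_qa_cells by blast
  have "is_qrt \<sigma> (pi_sigma \<sigma> Q)"
    unfolding is_qrt_def pi_sigma_def
    using cells is_quasi_arrayD(2)[OF Q] qa_row_mono[OF Q] qa_col_strict[OF Q] by auto
  moreover have "pi_sigma \<sigma> Q (i, j) \<le> n + length \<sigma> - 1" if c: "(i, j) \<in> ribbon_cells \<sigma>" for i j
    using qa_le_last[OF Q cells[OF c]] last c by (auto simp: pi_sigma_def mem_ribbon_cells_iff)
  ultimately show ?thesis by (auto simp: Gamma_V_def)
qed

text \<open>By \<open>qa_diag_cell\<close>, a quasi-array \<open>Q\<close> has the entry \<open>Q (1, d) + (diag_row d - 1)\<close>
  on the ribbon cell of diagonal \<open>d\<close>; solving for \<open>Q (1, d)\<close> recovers \<open>Q\<close> from its tableau.\<close>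
definition qa_of_tableau :: "array \<Rightarrow> array" where
  "qa_of_tableau T = qa_of_row M (\<lambda>d. T (diag_cell d) - (diag_row d - 1))"

context
  fixes T assumes T: "is_qrt \<sigma> T"
begin

lemma is_quasi_array_qa_of_tableau: "is_quasi_array M (qa_of_tableau T)"
  unfolding qa_of_tableau_def
proof (rule is_quasi_array_qa_of_row)
  fix d assume "1 \<le> d" "d \<le> M"
  then show "0 < T (diag_cell d) - (diag_row d - 1)"
    using diag_row_le_qrt[OF T, of d] diag_row_ge_1[of d] by arith
next
  fix d assume d: "1 \<le> d" "d < M"
  then show "T (diag_cell d) - (diag_row d - 1) \<le> T (diag_cell (d + 1)) - (diag_row (d + 1) - 1)"
    using qrt_diag_Suc[OF T d] diag_row_Suc[OF d] diag_row_ge_1[of d] by auto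
qed

lemma pi_sigma_qa_of_tableau: "pi_sigma \<sigma> (qa_of_tableau T) = T"
proof
  fix c
  show "pi_sigma \<sigma> (qa_of_tableau T) c = T c"
  proof (cases "c \<in> ribbon_cells \<sigma>")
    case True
    then obtain d where d: "1 \<le> d" "d \<le> M" "c = diag_cell d" by (auto simp: ribbon_cells_eq_image)
    then have "qa_of_tableau T c = T c"
      using qa_of_row_diag_cell diag_row_le_qrt[OF T, of d] diag_row_ge_1[of d]
      by (simp add: qa_of_tableau_def)
    then show ?thesis using True by (simp add: pi_sigma_def)
  next
    case False
    then show ?thesis using qrt_outside_ribbon[OF T] by (simp add: pi_sigma_def)
  qed
qed

end

lemma qa_of_tableau_in_Delta_V:
  assumes T: "T \<in> Gamma_V (n + length \<sigma> - 1) \<sigma>" and M: "1 \<le> M"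
  shows "qa_of_tableau T \<in> Delta_V n M"
proof -
  have qrt: "is_qrt \<sigma> T" and "T (diag_cell M) \<le> n + length \<sigma> - 1"
    using T diag_cell_in_ribbon_cells[of M] M by (auto simp: Gamma_V_def)
  then have "qa_of_tableau T (1, M) \<le> n"
    using qa_of_row_first_row[of M M] diag_row_last[OF M] M by (simp add: qa_of_tableau_def)
  then show ?thesis using is_quasi_array_qa_of_tableau[OF qrt] by (simp add: Delta_V_def)
qed

lemma qa_bar_eqI: "is_quasi_array M Q \<Longrightarrow> pi_sigma \<sigma> Q = T \<Longrightarrow> qa_bar M \<sigma> T = Q"
  unfolding qa_bar_def using pi_sigma_inj by blast

end

section \<open>The column reading\<close>

definition reading_cells :: "nat list \<Rightarrow> (nat \<times> nat) list" where
  "reading_cells \<sigma> = concat (map (\<lambda>j. map (\<lambda>i. (i, j))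
       (filter (\<lambda>i. (i, j) \<in> ribbon_cells \<sigma>) (rev [1..<length \<sigma> + 1])))
     [1..<sum_list \<sigma> + 1])"

lemma col_reading_eq_map: "col_reading \<sigma> T = map T (reading_cells \<sigma>)"
  by (simp add: col_reading_def reading_cells_def map_concat comp_def)

definition reading_less :: "nat \<times> nat \<Rightarrow> nat \<times> nat \<Rightarrow> bool" where
  "reading_less a b \<longleftrightarrow> snd a < snd b \<or> (snd a = snd b \<and> fst b < fst a)"

lemma sorted_wrt_reading_less_columns:
  assumes "sorted_wrt (<) js" "sorted_wrt (<) (is :: nat list)"
  shows "sorted_wrt reading_less (concat (map (\<lambda>j. map (\<lambda>i. (i, j)) (filter (P j) (rev is))) js))"
  using assms(1)
proof (induction js)
  case (Cons j js)
  have "sorted_wrt (\<lambda>x y. y < x) (filter (P j) (rev is))"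
    using assms(2) by (intro sorted_wrt_filter) (simp add: sorted_wrt_rev)
  then have "sorted_wrt reading_less (map (\<lambda>i. (i, j)) (filter (P j) (rev is)))"
    by (simp add: sorted_wrt_map reading_less_def)
  moreover have "\<forall>x\<in>set (map (\<lambda>i. (i, j)) (filter (P j) (rev is))).
      \<forall>y\<in>set (concat (map (\<lambda>j. map (\<lambda>i. (i, j)) (filter (P j) (rev is))) js)). reading_less x y"
    using Cons.prems by (auto simp: reading_less_def)
  ultimately show ?case using Cons by (simp add: sorted_wrt_append)
qed simp

lemma sorted_wrt_reading_cells: "sorted_wrt reading_less (reading_cells \<sigma>)"
  unfolding reading_cells_def by (rule sorted_wrt_reading_less_columns) (simp only: sorted_wrt_upt)+

lemma distinct_reading_cells: "distinct (reading_cells \<sigma>)"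
proof -
  have "sorted_wrt reading_less xs \<Longrightarrow> distinct xs" for xs
    by (induction xs) (auto simp: reading_less_def)
  then show ?thesis using sorted_wrt_reading_cells by blast
qed

lemma less_iff_reading_less_nth:
  assumes "p < length (reading_cells \<sigma>)" "p' < length (reading_cells \<sigma>)"
  shows "p < p' \<longleftrightarrow> reading_less (reading_cells \<sigma> ! p) (reading_cells \<sigma> ! p')"
proof -
  have sorted: "reading_less (reading_cells \<sigma> ! a) (reading_cells \<sigma> ! b)"
    if "a < b" "b < length (reading_cells \<sigma>)" for a b
    using sorted_wrt_reading_cells that unfolding sorted_wrt_iff_nth_less by blast
  show ?thesis
  proof
    assume "reading_less (reading_cells \<sigma> ! p) (reading_cells \<sigma> ! p')"
    then show "p < p'"
      using sorted[of p' p] assms by (cases p p' rule: linorder_cases) (auto simp: reading_less_def)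
  qed (use sorted assms in blast)
qed

lemma map_fun_upd_nth_distinct:
  "distinct xs \<Longrightarrow> p < length xs \<Longrightarrow> map (f(xs ! p := v)) xs = (map f xs)[p := v]"
  by (rule nth_equalityI) (auto simp: nth_eq_iff_index_eq)

lemma ex_less_nth_map_iff:
  "(\<exists>p q. p < q \<and> q < length (map f xs) \<and> map f xs ! p = a \<and> map f xs ! q = b) \<longleftrightarrow>
   (\<exists>p q. p < q \<and> q < length xs \<and> f (xs ! p) = a \<and> f (xs ! q) = b)"
  by (rule ex_cong1, rule ex_cong1) auto

lemma map_eq_imp_eq_zero_outside:
  "map f xs = map g xs \<Longrightarrow> (\<And>c. c \<notin> set xs \<Longrightarrow> f c = 0) \<Longrightarrow>
    (\<And>c. c \<notin> set xs \<Longrightarrow> g c = 0) \<Longrightarrow> f = g"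
  by (auto simp: fun_eq_iff map_eq_conv)

context ribbon
begin

lemma set_reading_cells: "set (reading_cells \<sigma>) = ribbon_cells \<sigma>"
proof
  show "set (reading_cells \<sigma>) \<subseteq> ribbon_cells \<sigma>" by (auto simp: reading_cells_def)
next
  show "ribbon_cells \<sigma> \<subseteq> set (reading_cells \<sigma>)"
  proof
    fix c assume c: "c \<in> ribbon_cells \<sigma>"
    obtain i j where c_eq: "c = (i, j)" by (cases c)
    then have "i \<le> length \<sigma>" "(i, j) \<in> qa_cells M"
      using c ribbon_cells_subset_qa_cells by (auto simp: mem_ribbon_cells_iff)
    then have ij: "c = (i, j)" "1 \<le> i" "i \<le> length \<sigma>" "1 \<le> j" "j \<le> M"
      using c_eq by (auto simp: qa_cells_def)
    then have "i \<in> set (filter (\<lambda>i. (i, j) \<in> ribbon_cells \<sigma>) (rev [1..<length \<sigma> + 1]))"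
      using c by (simp del: upt_Suc)
    then have "c \<in> (\<lambda>i. (i, j)) ` set (filter (\<lambda>i. (i, j) \<in> ribbon_cells \<sigma>) (rev [1..<length \<sigma> + 1]))"
      using ij(1) by blast
    moreover have "j \<in> set [1..<M + 1]" using ij by (simp del: upt_Suc)
    ultimately show "c \<in> set (reading_cells \<sigma>)"
      unfolding reading_cells_def set_concat set_map image_image by blast
  qed
qed

lemma reading_cells_nth:
  "p < length (reading_cells \<sigma>) \<Longrightarrow> \<exists>d. 1 \<le> d \<and> d \<le> M \<and> reading_cells \<sigma> ! p = diag_cell d"
  using nth_mem[of p "reading_cells \<sigma>"] by (force simp: set_reading_cells ribbon_cells_eq_image)

lemma diag_cell_reading_index:
  "1 \<le> d \<Longrightarrow> d \<le> M \<Longrightarrow> \<exists>p. p < length (reading_cells \<sigma>) \<and> reading_cells \<sigma> ! p = diag_cell d"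
  using diag_cell_in_ribbon_cells[of d] by (simp add: set_reading_cells[symmetric] in_set_conv_nth)

lemma reading_less_diag_cell_iff:
  "reading_less (diag_cell e) (diag_cell d) \<longleftrightarrow>
     diag_col e < diag_col d \<or> (diag_col e = diag_col d \<and> diag_row d < diag_row e)"
  by (simp add: reading_less_def diag_cell_def)

context
  fixes T assumes T: "is_qrt \<sigma> T"
begin

lemma reading_descent_imp_column:
  assumes pq: "p < q" "q < length (reading_cells \<sigma>)"
    and entries: "T (reading_cells \<sigma> ! p) = i + 1" "T (reading_cells \<sigma> ! q) = i"
  shows "\<exists>d. 1 \<le> d \<and> d < M \<and> diag_row (d + 1) = diag_row d + 1 \<and>
      T (diag_cell d) = i \<and> T (diag_cell (d + 1)) = i + 1"
proof -
  obtain e where e: "1 \<le> e" "e \<le> M" "reading_cells \<sigma> ! p = diag_cell e"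
    using reading_cells_nth[of p] pq by auto
  obtain d where d: "1 \<le> d" "d \<le> M" "reading_cells \<sigma> ! q = diag_cell d"
    using reading_cells_nth[of q] pq by auto
  have less: "reading_less (diag_cell e) (diag_cell d)"
    using less_iff_reading_less_nth[of p \<sigma> q] pq e d by simp
  have "d < e"
  proof (rule ccontr)
    assume "\<not> d < e"
    then have "T (diag_cell e) \<le> T (diag_cell d)" using qrt_diag_mono[OF T, of e d] e d by simp
    then show False using entries e d by simp
  qed
  moreover have "diag_col d = diag_col e"
    using diag_col_mono[of d e] less d e \<open>d < e\<close> by (auto simp: reading_less_diag_cell_iff)
  ultimately have down: "diag_row (d + 1) = diag_row d + 1"
    using diag_col_eq_imp_down d e by simp
  have "T (diag_cell d) < T (diag_cell (d + 1))"
    using qrt_diag_Suc[OF T, of d] d e \<open>d < e\<close> down by simp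
  moreover have "T (diag_cell (d + 1)) \<le> T (diag_cell e)"
    using qrt_diag_mono[OF T, of "d + 1" e] d e \<open>d < e\<close> by simp
  ultimately show ?thesis
    using entries d e \<open>d < e\<close> down by (intro exI[of _ d]) auto
qed

lemma column_imp_reading_descent:
  assumes d: "1 \<le> d" "d < M" "diag_row (d + 1) = diag_row d + 1"
  shows "\<exists>p q. p < q \<and> q < length (reading_cells \<sigma>) \<and>
      T (reading_cells \<sigma> ! p) = T (diag_cell (d + 1)) \<and> T (reading_cells \<sigma> ! q) = T (diag_cell d)"
proof -
  obtain p where p: "p < length (reading_cells \<sigma>)" "reading_cells \<sigma> ! p = diag_cell (d + 1)"
    using diag_cell_reading_index[of "d + 1"] d by auto
  obtain q where q: "q < length (reading_cells \<sigma>)" "reading_cells \<sigma> ! q = diag_cell d"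
    using diag_cell_reading_index[of d] d by auto
  have "diag_col (d + 1) = diag_col d" using d diag_row_le[of d] by (simp add: diag_col_def)
  then have "p < q"
    using less_iff_reading_less_nth[of p \<sigma> q] p q d by (simp add: reading_less_diag_cell_iff)
  then show ?thesis using p q by (intro exI[of _ p] exI[of _ q]) simp
qed

lemma last_reading_index:
  assumes k: "1 \<le> k" "k \<le> M"
    and last: "\<And>x. 1 \<le> x \<Longrightarrow> x \<le> M \<Longrightarrow> T (diag_cell x) = T (diag_cell k) \<Longrightarrow> x \<le> k"
    and p: "p < length (reading_cells \<sigma>)" "reading_cells \<sigma> ! p = diag_cell k"
  shows "(GREATEST p'. p' < length (col_reading \<sigma> T) \<and> col_reading \<sigma> T ! p' = T (diag_cell k)) = p"
proof (rule Greatest_equality)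
  show "p < length (col_reading \<sigma> T) \<and> col_reading \<sigma> T ! p = T (diag_cell k)"
    using p by (simp add: col_reading_eq_map)
next
  fix y assume y: "y < length (col_reading \<sigma> T) \<and> col_reading \<sigma> T ! y = T (diag_cell k)"
  then obtain d where d: "1 \<le> d" "d \<le> M" "reading_cells \<sigma> ! y = diag_cell d"
    using reading_cells_nth[of y] by (auto simp: col_reading_eq_map)
  have "col_reading \<sigma> T ! y = T (reading_cells \<sigma> ! y)"
    using y[THEN conjunct1] by (simp add: col_reading_eq_map)
  then have Td: "T (diag_cell d) = T (diag_cell k)" using y d by simp
  then have "d \<le> k" using last d by blast
  show "y \<le> p"
  proof (rule ccontr)
    assume "\<not> y \<le> p"
    then have less: "reading_less (diag_cell k) (diag_cell d)"
      using less_iff_reading_less_nth[of p \<sigma> y] p y d by (simp add: col_reading_eq_map)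
    then have "d \<noteq> k" by (auto simp: reading_less_def)
    then have "d < k" using \<open>d \<le> k\<close> by simp
    moreover have "diag_col d = diag_col k"
      using diag_col_mono[of d k] less d k \<open>d \<le> k\<close> by (auto simp: reading_less_diag_cell_iff)
    ultimately have "T (diag_cell d) < T (diag_cell k)" using qrt_diag_col_strict[OF T, of d k] d k by simp
    then show False using Td by simp
  qed
qed

lemma qk_defined_col_reading_iff:
  "qk_defined i (col_reading \<sigma> T) \<longleftrightarrow> (\<exists>k. 1 \<le> k \<and> k \<le> M \<and> T (diag_cell k) = i \<and> raisable T k)"
proof -
  have defined_iff: "qk_defined i (col_reading \<sigma> T) \<longleftrightarrow>
      (\<exists>d. 1 \<le> d \<and> d \<le> M \<and> T (diag_cell d) = i) \<and>
      \<not> (\<exists>p q. p < q \<and> q < length (reading_cells \<sigma>) \<and>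
          T (reading_cells \<sigma> ! p) = i + 1 \<and> T (reading_cells \<sigma> ! q) = i)"
    unfolding qk_defined_def col_reading_eq_map ex_less_nth_map_iff
    by (auto simp: set_reading_cells ribbon_cells_eq_image)
  show ?thesis
  proof
    assume "qk_defined i (col_reading \<sigma> T)"
    then obtain d where d: "1 \<le> d" "d \<le> M" "T (diag_cell d) = i"
      and no_descent: "\<not> (\<exists>p q. p < q \<and> q < length (reading_cells \<sigma>) \<and>
          T (reading_cells \<sigma> ! p) = i + 1 \<and> T (reading_cells \<sigma> ! q) = i)"
      unfolding defined_iff by blast
    define k where "k = (GREATEST x. x \<le> M \<and> 1 \<le> x \<and> T (diag_cell x) = i)"
    have k: "k \<le> M \<and> 1 \<le> k \<and> T (diag_cell k) = i"
      unfolding k_def by (rule GreatestI_nat[of _ d M]) (use d in auto)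
    have last: "x \<le> k" if "1 \<le> x" "x \<le> M" "T (diag_cell x) = i" for x
      unfolding k_def by (rule Greatest_le_nat[of _ x M]) (use that in auto)
    have "raisable T k"
    proof (rule raisableI[OF T])
      fix x assume "1 \<le> x" "x \<le> M" "T (diag_cell x) = T (diag_cell k)"
      then show "x \<le> k" by (intro last) (use k in auto)
    next
      assume "diag_row (k + 1) = diag_row k + 1" "k < M"
      then show "T (diag_cell (k + 1)) \<noteq> T (diag_cell k) + 1"
        using column_imp_reading_descent[of k] k no_descent by auto
    qed (use k in auto)
    then show "\<exists>k. 1 \<le> k \<and> k \<le> M \<and> T (diag_cell k) = i \<and> raisable T k" using k by blast
  next
    assume "\<exists>k. 1 \<le> k \<and> k \<le> M \<and> T (diag_cell k) = i \<and> raisable T k"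
    then obtain k where k: "1 \<le> k" "k \<le> M" "raisable T k" and i: "T (diag_cell k) = i" by blast
    have "\<not> (\<exists>p q. p < q \<and> q < length (reading_cells \<sigma>) \<and>
          T (reading_cells \<sigma> ! p) = i + 1 \<and> T (reading_cells \<sigma> ! q) = i)"
      using reading_descent_imp_column raisable_imp_no_column[OF T k] i by metis
    then show "qk_defined i (col_reading \<sigma> T)" unfolding defined_iff using k i by blast
  qed
qed

lemma qk_f_col_reading:
  assumes k: "1 \<le> k" "k \<le> M" and raisable: "raisable T k"
  shows "qk_f (T (diag_cell k)) (col_reading \<sigma> T) =
    col_reading \<sigma> (T(diag_cell k := T (diag_cell k) + 1))"
proof -
  obtain p where p: "p < length (reading_cells \<sigma>)" "reading_cells \<sigma> ! p = diag_cell k"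
    using diag_cell_reading_index k by blast
  have "(GREATEST p'. p' < length (col_reading \<sigma> T) \<and> col_reading \<sigma> T ! p' = T (diag_cell k)) = p"
    using last_reading_index[OF k raisable_imp_last[OF T k raisable] p] .
  then show ?thesis
    using map_fun_upd_nth_distinct[OF distinct_reading_cells p(1), of T] p(2)
    by (simp add: qk_f_def col_reading_eq_map)
qed

end

lemma col_reading_inj:
  assumes "col_reading \<sigma> T = col_reading \<sigma> T'"
    and "\<And>c. c \<notin> ribbon_cells \<sigma> \<Longrightarrow> T c = 0" "\<And>c. c \<notin> ribbon_cells \<sigma> \<Longrightarrow> T' c = 0"
  shows "T = T'"
proof (rule map_eq_imp_eq_zero_outside)
  show "map T (reading_cells \<sigma>) = map T' (reading_cells \<sigma>)"
    using assms(1) by (simp only: col_reading_eq_map)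
qed (use assms(2,3) set_reading_cells in auto)

end

section \<open>The bijection on edges\<close>

context ribbon
begin

lemma Gamma_E_iff:
  assumes T: "T \<in> Gamma_V N \<sigma>" and T': "T' \<in> Gamma_V N \<sigma>"
  shows "(T, T') \<in> Gamma_E N \<sigma> \<longleftrightarrow>
    (\<exists>k. 1 \<le> k \<and> k \<le> M \<and> raisable T k \<and> T' = T(diag_cell k := T (diag_cell k) + 1))"
proof -
  have qrt: "is_qrt \<sigma> T" "is_qrt \<sigma> T'" using T T' by (auto simp: Gamma_V_def)
  have raise_eq: "col_reading \<sigma> T' = col_reading \<sigma> (T(diag_cell k := T (diag_cell k) + 1)) \<longleftrightarrow>
      T' = T(diag_cell k := T (diag_cell k) + 1)" if "1 \<le> k" "k \<le> M" for k
    using col_reading_inj qrt_outside_ribbon[OF qrt(1)] qrt_outside_ribbon[OF qrt(2)]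
      diag_cell_in_ribbon_cells[OF that] by (metis fun_upd_other)
  show ?thesis
  proof
    assume "(T, T') \<in> Gamma_E N \<sigma>"
    then obtain i where "qk_defined i (col_reading \<sigma> T)" "col_reading \<sigma> T' = qk_f i (col_reading \<sigma> T)"
      by (auto simp: Gamma_E_def)
    then show "\<exists>k. 1 \<le> k \<and> k \<le> M \<and> raisable T k \<and> T' = T(diag_cell k := T (diag_cell k) + 1)"
      using qk_defined_col_reading_iff[OF qrt(1)] qk_f_col_reading[OF qrt(1)] raise_eq by metis
  next
    assume "\<exists>k. 1 \<le> k \<and> k \<le> M \<and> raisable T k \<and> T' = T(diag_cell k := T (diag_cell k) + 1)"
    then obtain k where k: "1 \<le> k" "k \<le> M" "raisable T k" and T'_eq: "T' = T(diag_cell k := T (diag_cell k) + 1)"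
      by blast
    have "0 < T (diag_cell k)" using qrt(1) diag_cell_in_ribbon_cells[OF k(1,2)] by (simp add: is_qrt_def)
    moreover have "T (diag_cell k) + 1 \<le> N"
      using T' T'_eq diag_cell_in_ribbon_cells[OF k(1,2)] by (auto simp: Gamma_V_def)
    moreover have "qk_defined (T (diag_cell k)) (col_reading \<sigma> T)"
      using qk_defined_col_reading_iff[OF qrt(1)] k by blast
    ultimately show "(T, T') \<in> Gamma_E N \<sigma>"
      using T T' qk_f_col_reading[OF qrt(1) k] T'_eq unfolding Gamma_E_def
      by (auto intro!: exI[of _ "T (diag_cell k)"])
  qed
qed

lemma qa_D_defined_iff_raisable:
  assumes Q: "is_quasi_array M Q" and k: "1 \<le> k" "k \<le> M"
  shows "qa_D_defined M k Q \<longleftrightarrow> raisable (pi_sigma \<sigma> Q) k"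
proof (cases "k = M")
  case False
  then have kM: "k < M" using k by simp
  have "pi_sigma \<sigma> Q (diag_cell d) = Q (1, d) + (diag_row d - 1)" if "1 \<le> d" "d \<le> M" for d
    using pi_sigma_diag_cell qa_diag_cell[OF Q] that by simp
  then show ?thesis
    using diag_row_Suc[of k] diag_row_ge_1[of k] k kM
    by (auto simp: qa_D_defined_def raisable_def)
qed (simp add: qa_D_defined_def raisable_def)

lemma Delta_E_iff_Gamma_E:
  assumes Q: "Q \<in> Delta_V n M" and Q': "Q' \<in> Delta_V n M"
  shows "(Q, Q') \<in> Delta_E n M \<longleftrightarrow>
    (pi_sigma \<sigma> Q, pi_sigma \<sigma> Q') \<in> Gamma_E (n + length \<sigma> - 1) \<sigma>"
proof -
  have qa: "is_quasi_array M Q" "is_quasi_array M Q'" using Q Q' by (auto simp: Delta_V_def)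
  have step_iff: "Q' = qa_D M k Q \<longleftrightarrow>
      pi_sigma \<sigma> Q' = (pi_sigma \<sigma> Q)(diag_cell k := pi_sigma \<sigma> Q (diag_cell k) + 1)"
    if "1 \<le> k" "k \<le> M" "qa_D_defined M k Q" for k
    using pi_sigma_inj[OF qa(2) is_quasi_array_qa_D[OF qa(1) that]] pi_sigma_qa_D[OF qa(1) that(1,2)]
    by metis
  have "(Q, Q') \<in> Delta_E n M \<longleftrightarrow> (\<exists>k. 1 \<le> k \<and> k \<le> M \<and> qa_D_defined M k Q \<and> Q' = qa_D M k Q)"
    using Q Q' by (auto simp: Delta_E_def)
  also have "\<dots> \<longleftrightarrow> (\<exists>k. 1 \<le> k \<and> k \<le> M \<and> raisable (pi_sigma \<sigma> Q) k \<and>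
      pi_sigma \<sigma> Q' = (pi_sigma \<sigma> Q)(diag_cell k := pi_sigma \<sigma> Q (diag_cell k) + 1))"
    using step_iff qa_D_defined_iff_raisable[OF qa(1)] by metis
  also have "\<dots> \<longleftrightarrow> (pi_sigma \<sigma> Q, pi_sigma \<sigma> Q') \<in> Gamma_E (n + length \<sigma> - 1) \<sigma>"
    using Gamma_E_iff pi_sigma_in_Gamma_V Q Q' by presburger
  finally show ?thesis .
qed

end

theorem theorem4p5:
  fixes n m :: nat and \<sigma> :: "nat list"
  assumes "0 < n" and "0 < m"
    and "\<forall>x \<in> set \<sigma>. 0 < x" and "sum_list \<sigma> = m"
  defines "N \<equiv> n + length \<sigma> - 1"
  shows "(\<forall>Q \<in> Delta_V n m. pi_sigma \<sigma> Q \<in> Gamma_V N \<sigma>) \<and>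
         (\<forall>T \<in> Gamma_V N \<sigma>. qa_bar m \<sigma> T \<in> Delta_V n m) \<and>
         (\<forall>Q \<in> Delta_V n m. qa_bar m \<sigma> (pi_sigma \<sigma> Q) = Q) \<and>
         (\<forall>T \<in> Gamma_V N \<sigma>. pi_sigma \<sigma> (qa_bar m \<sigma> T) = T) \<and>
         (\<forall>Q \<in> Delta_V n m. \<forall>Q' \<in> Delta_V n m.
            (Q, Q') \<in> Delta_E n m \<longleftrightarrow> (pi_sigma \<sigma> Q, pi_sigma \<sigma> Q') \<in> Gamma_E N \<sigma>) \<and>
         (\<forall>T \<in> Gamma_V N \<sigma>. \<forall>T' \<in> Gamma_V N \<sigma>.
            (T, T') \<in> Gamma_E N \<sigma> \<longleftrightarrow> (qa_bar m \<sigma> T, qa_bar m \<sigma> T') \<in> Delta_E n m)"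
proof -
  interpret ribbon \<sigma> using assms(3) by unfold_locales
  have m: "m = M" "1 \<le> M" using assms(2,4) by auto
  have pi_in: "pi_sigma \<sigma> Q \<in> Gamma_V N \<sigma>" if "Q \<in> Delta_V n m" for Q
    using pi_sigma_in_Gamma_V that by (simp add: N_def m(1))
  have bar_pi: "qa_bar m \<sigma> (pi_sigma \<sigma> Q) = Q" if "Q \<in> Delta_V n m" for Q
    using qa_bar_eqI that by (simp add: Delta_V_def m(1))
  have bar_eq: "qa_bar m \<sigma> T = qa_of_tableau T" if "T \<in> Gamma_V N \<sigma>" for T
    using that qa_bar_eqI is_quasi_array_qa_of_tableau pi_sigma_qa_of_tableau
    by (auto simp: Gamma_V_def m(1))
  have bar_in: "qa_bar m \<sigma> T \<in> Delta_V n m" if "T \<in> Gamma_V N \<sigma>" for T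
    using bar_eq[OF that] qa_of_tableau_in_Delta_V[OF _ m(2)] that by (simp add: N_def m(1))
  have pi_bar: "pi_sigma \<sigma> (qa_bar m \<sigma> T) = T" if "T \<in> Gamma_V N \<sigma>" for T
    using that bar_eq pi_sigma_qa_of_tableau by (auto simp: Gamma_V_def)
  have edges: "(Q, Q') \<in> Delta_E n m \<longleftrightarrow> (pi_sigma \<sigma> Q, pi_sigma \<sigma> Q') \<in> Gamma_E N \<sigma>"
    if "Q \<in> Delta_V n m" "Q' \<in> Delta_V n m" for Q Q'
    using Delta_E_iff_Gamma_E that by (simp add: N_def m(1))
  have bar_edges: "(T, T') \<in> Gamma_E N \<sigma> \<longleftrightarrow> (qa_bar m \<sigma> T, qa_bar m \<sigma> T') \<in> Delta_E n m"
    if "T \<in> Gamma_V N \<sigma>" "T' \<in> Gamma_V N \<sigma>" for T T'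
    using edges[OF bar_in[OF that(1)] bar_in[OF that(2)]] pi_bar that by simp
  show ?thesis using pi_in bar_in bar_pi pi_bar edges bar_edges by blast
qed

end
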